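(* If $X\subseteq \mathcal P(\omega)$ is an ultrafilter on $\omega$ (viewed as a subspace of $2^\omega$ via characteristic functions), then Alice has a winning strategy in the grouped Menger game played on $X$.
   Context: $\mathcal P(\omega)$ is identified with $2^\omega$ via characteristic functions, with the product topology. Grouped Menger game on $X\subseteq 2^\omega$: in each round $n\in\omega$ Alice selects a natural number $l_n>0$ and then the players play $l_n$ subrounds of the Menger game, indexed by $i\in[L_n,L_{n+1})$ where $L_0=0$, $L_{n+1}=l_0+\dots+l_n$: in subround $i$ Alice picks an open cover $\mathcal U_i$ of $X$ and Bob picks a finite $\mathcal F_i\subseteq\mathcal U_i$. Bob wins if $X=\bigcup_{n\in\omega}\bigcap_{i\in[L_n,L_{n+1})}\bigcup\mathcal F_i$; otherwise Alice wins. *)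

theory Defs
  imports "HOL-Analysis.Analysis"
begin

definition chi :: "nat set \<Rightarrow> (nat \<Rightarrow> bool)" where
  "chi A = (\<lambda>n. n \<in> A)"

definition cantor_top :: "(nat \<Rightarrow> bool) topology" where
  "cantor_top = product_topology (\<lambda>_. discrete_topology UNIV) UNIV"

definition open_in_sub :: "nat set set \<Rightarrow> nat set set \<Rightarrow> bool" where
  "open_in_sub X U \<longleftrightarrow> openin (subtopology cantor_top (chi ` X)) (chi ` U)"

definition open_cover :: "nat set set \<Rightarrow> nat set set set \<Rightarrow> bool" where
  "open_cover X \<U> \<longleftrightarrow> (\<forall>U\<in>\<U>. open_in_sub X U) \<and> \<Union>\<U> = X"

definition ultrafilter_on_nat :: "nat set set \<Rightarrow> bool" where
  "ultrafilter_on_nat X \<longleftrightarrow>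
     UNIV \<in> X \<and> {} \<notin> X \<and>
     (\<forall>A B. A \<in> X \<and> A \<subseteq> B \<longrightarrow> B \<in> X) \<and>
     (\<forall>A B. A \<in> X \<and> B \<in> X \<longrightarrow> A \<inter> B \<in> X) \<and>
     (\<forall>A. A \<in> X \<or> - A \<in> X)"

definition nonprincipal :: "nat set set \<Rightarrow> bool" where
  "nonprincipal X \<longleftrightarrow> (\<forall>A\<in>X. infinite A)"

text \<open>A strategy of Alice: a function choosing the group length l_n from Bob's
  previous moves, and a function choosing the cover U_i from Bob's previous moves
  F_0,...,F_(i-1).\<close>
type_synonym alice_strategy =
  "(nat set set set list \<Rightarrow> nat) \<times> (nat set set set list \<Rightarrow> nat set set set)"

definition legal_alice :: "nat set set \<Rightarrow> alice_strategy \<Rightarrow> bool" where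
  "legal_alice X \<sigma> \<longleftrightarrow> (\<forall>h. fst \<sigma> h > 0 \<and> open_cover X (snd \<sigma> h))"

fun group_bound :: "alice_strategy \<Rightarrow> (nat \<Rightarrow> nat set set set) \<Rightarrow> nat \<Rightarrow> nat" where
  "group_bound \<sigma> F 0 = 0"
| "group_bound \<sigma> F (Suc n) =
     group_bound \<sigma> F n + fst \<sigma> (map F [0..<group_bound \<sigma> F n])"

definition bob_play_legal :: "alice_strategy \<Rightarrow> (nat \<Rightarrow> nat set set set) \<Rightarrow> bool" where
  "bob_play_legal \<sigma> F \<longleftrightarrow>
     (\<forall>i. finite (F i) \<and> F i \<subseteq> snd \<sigma> (map F [0..<i]))"

definition bob_wins :: "nat set set \<Rightarrow> alice_strategy \<Rightarrow> (nat \<Rightarrow> nat set set set) \<Rightarrow> bool" where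
  "bob_wins X \<sigma> F \<longleftrightarrow>
     X = (\<Union>n. \<Inter>i\<in>{group_bound \<sigma> F n..<group_bound \<sigma> F (Suc n)}. \<Union>(F i))"

definition alice_wins_grouped_menger :: "nat set set \<Rightarrow> bool" where
  "alice_wins_grouped_menger X \<longleftrightarrow>
     (\<exists>\<sigma>. legal_alice X \<sigma> \<and> (\<forall>F. bob_play_legal \<sigma> F \<longrightarrow> \<not> bob_wins X \<sigma> F))"

end

theory Submission
  imports Defs
begin

text \<open>Alice plays groups of two rounds. In each round she offers the cover of X by the sets
  \<open>{A \<in> X. k \<in> A}\<close> with \<open>k\<close> above every index Bob has used so far; since Bob picks finitely
  many, his choice in round \<open>i\<close> only covers ultrafilter sets meeting a block \<open>[M i, M (i+1))\<close>
  of a strictly increasing sequence \<open>M\<close>. The union \<open>E\<close> of the even blocks, or its complement,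
  belongs to \<open>X\<close>; but \<open>E\<close> misses every odd block and \<open>-E\<close> every even block, so this set is
  not covered by both rounds of any group.\<close>

definition containing :: "nat set set \<Rightarrow> nat \<Rightarrow> nat set set" where
  "containing X k = {A \<in> X. k \<in> A}"

definition tail_cover :: "nat set set \<Rightarrow> nat \<Rightarrow> nat set set set" where
  "tail_cover X m = containing X ` {m..}"

text \<open>The \<open>LEAST\<close> recovers an index \<open>k \<ge> m\<close> of each member \<open>U = containing X k\<close> of Bob's
  move; for sets outside \<open>tail_cover X m\<close> its value is junk but never used.\<close>
definition next_threshold :: "nat set set \<Rightarrow> nat \<Rightarrow> nat set set set \<Rightarrow> nat" where
  "next_threshold X m F = Suc (max m (Max ((\<lambda>U. LEAST k. m \<le> k \<and> U = containing X k) ` F)))"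

definition threshold :: "nat set set \<Rightarrow> nat set set set list \<Rightarrow> nat" where
  "threshold X h = foldl (next_threshold X) 0 h"

definition tail_strategy :: "nat set set \<Rightarrow> alice_strategy" where
  "tail_strategy X = (\<lambda>_. 2, \<lambda>h. tail_cover X (threshold X h))"

definition even_blocks :: "(nat \<Rightarrow> nat) \<Rightarrow> nat set" where
  "even_blocks M = {k. \<exists>i. even i \<and> M i \<le> k \<and> k < M (Suc i)}"

lemma open_in_sub_containing: "open_in_sub X (containing X k)"
proof -
  have "continuous_map cantor_top (discrete_topology UNIV) (\<lambda>f. f k)"
    unfolding cantor_top_def by (rule continuous_map_product_projection) simp
  then have "openin cantor_top {f \<in> topspace cantor_top. f k \<in> {True}}"
    by (rule openin_continuous_map_preimage) simp
  then have "openin cantor_top {f. f k}"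
    by (simp add: cantor_top_def)
  moreover have "chi ` containing X k = {f. f k} \<inter> chi ` X"
    unfolding containing_def chi_def by auto
  ultimately show ?thesis
    unfolding open_in_sub_def openin_subtopology by blast
qed

lemma open_cover_tail_cover:
  assumes "nonprincipal X"
  shows "open_cover X (tail_cover X m)"
proof -
  have "A \<in> \<Union> (tail_cover X m)" if "A \<in> X" for A
  proof -
    from that assms have "infinite A"
      unfolding nonprincipal_def by blast
    then obtain k where "k \<in> A" "m \<le> k"
      using infinite_nat_iff_unbounded_le by blast
    with that show ?thesis
      unfolding tail_cover_def containing_def by auto
  qed
  then show ?thesis
    unfolding open_cover_def tail_cover_def
    using open_in_sub_containing by (auto simp: containing_def)
qed

lemma less_next_threshold: "m < next_threshold X m F"
  unfolding next_threshold_def by simp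

lemma finite_subcover_hits_block:
  assumes "finite F" "F \<subseteq> tail_cover X m" "A \<in> \<Union>F"
  shows "\<exists>k\<in>A. m \<le> k \<and> k < next_threshold X m F"
proof -
  obtain U where U: "U \<in> F" "A \<in> U"
    using assms(3) by blast
  then obtain k0 where k0: "m \<le> k0 \<and> U = containing X k0"
    using assms(2) unfolding tail_cover_def by auto
  define k where "k = (LEAST k. m \<le> k \<and> U = containing X k)"
  have k: "m \<le> k \<and> U = containing X k"
    unfolding k_def by (rule LeastI[where k = k0]) (rule k0)
  have "k \<le> Max ((\<lambda>U. LEAST k. m \<le> k \<and> U = containing X k) ` F)"
    using assms(1) U(1) k_def by (intro Max_ge) auto
  then have "k < next_threshold X m F"
    unfolding next_threshold_def by simp
  with k U(2) show ?thesis
    unfolding containing_def by auto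
qed

lemma legal_tail_strategy:
  assumes "nonprincipal X"
  shows "legal_alice X (tail_strategy X)"
  unfolding legal_alice_def tail_strategy_def
  using open_cover_tail_cover[OF assms] by simp

lemma group_bound_tail_strategy: "group_bound (tail_strategy X) F n = 2 * n"
  by (induction n) (simp_all add: tail_strategy_def)

lemma strict_mono_threshold: "strict_mono (\<lambda>i. threshold X (map F [0..<i]))"
  by (rule strict_monoI_Suc) (simp add: threshold_def less_next_threshold)

lemma legal_play_hits_block:
  assumes "bob_play_legal (tail_strategy X) F" "A \<in> \<Union>(F i)"
  defines "M \<equiv> \<lambda>i. threshold X (map F [0..<i])"
  shows "\<exists>k\<in>A. M i \<le> k \<and> k < M (Suc i)"
proof -
  have "finite (F i)" "F i \<subseteq> tail_cover X (M i)"
    using assms(1) unfolding bob_play_legal_def tail_strategy_def M_def by auto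
  moreover have "M (Suc i) = next_threshold X (M i) (F i)"
    unfolding M_def threshold_def by simp
  ultimately show ?thesis
    using finite_subcover_hits_block assms(2) by metis
qed

lemma block_unique:
  assumes "strict_mono (M :: nat \<Rightarrow> nat)"
    and "M i \<le> k" "k < M (Suc i)" "M j \<le> k" "k < M (Suc j)"
  shows "i = j"
proof -
  have "\<not> i < j" if "M i \<le> k" "k < M (Suc i)" "M j \<le> k" "k < M (Suc j)" for i j
    using that strict_mono_less_eq[OF assms(1), of "Suc i" j] by (auto simp: Suc_le_eq)
  with assms show ?thesis
    by (meson linorder_neqE_nat)
qed

lemma mem_even_blocks_iff:
  assumes "strict_mono M" "M i \<le> k" "k < M (Suc i)"
  shows "k \<in> even_blocks M \<longleftrightarrow> even i"
  unfolding even_blocks_def using block_unique[OF assms(1)] assms(2,3) by blast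

lemma even_blocks_escape_pairs:
  assumes "strict_mono M"
    and hits: "\<And>i A. A \<in> \<Union>(F i) \<Longrightarrow> \<exists>k\<in>A. M i \<le> k \<and> k < M (Suc i)"
    and "x = even_blocks M \<or> x = - even_blocks M"
  shows "x \<notin> \<Union>(F (2 * n)) \<inter> \<Union>(F (Suc (2 * n)))"
proof
  assume x: "x \<in> \<Union>(F (2 * n)) \<inter> \<Union>(F (Suc (2 * n)))"
  from assms(3) show False
  proof
    assume "x = even_blocks M"
    with x hits[of x "Suc (2 * n)"] show False
      using mem_even_blocks_iff[OF assms(1)] by fastforce
  next
    assume "x = - even_blocks M"
    with x hits[of x "2 * n"] show False
      using mem_even_blocks_iff[OF assms(1)] by fastforce
  qed
qed

theorem mainTheorem5:
  fixes X :: "nat set set"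
  assumes "ultrafilter_on_nat X" and "nonprincipal X"
  shows "alice_wins_grouped_menger X"
proof -
  have "\<not> bob_wins X (tail_strategy X) F"
    if legal: "bob_play_legal (tail_strategy X) F" for F
  proof -
    define M where "M i = threshold X (map F [0..<i])" for i
    obtain x where x: "x \<in> X" "x = even_blocks M \<or> x = - even_blocks M"
      using assms(1) unfolding ultrafilter_on_nat_def by blast
    have "strict_mono M"
      unfolding M_def by (rule strict_mono_threshold)
    moreover have "\<exists>k\<in>A. M i \<le> k \<and> k < M (Suc i)" if "A \<in> \<Union>(F i)" for i A
      unfolding M_def by (rule legal_play_hits_block[OF legal that])
    ultimately have escape: "x \<notin> \<Union>(F (2 * n)) \<inter> \<Union>(F (Suc (2 * n)))" for n
      by (rule even_blocks_escape_pairs[OF _ _ x(2)])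
    have "x \<notin> (\<Inter>i\<in>{2 * n..<2 * Suc n}. \<Union>(F i))" for n
      using escape[of n] by (auto simp del: Union_iff)
    then have "x \<notin> (\<Union>n. \<Inter>i\<in>{2 * n..<2 * Suc n}. \<Union>(F i))"
      by blast
    with x(1) show ?thesis
      unfolding bob_wins_def group_bound_tail_strategy by blast
  qed
  with legal_tail_strategy[OF assms(2)] show ?thesis
    unfolding alice_wins_grouped_menger_def by blast
qed

end
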